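(* Let $L$ be a finite $\mathcal{L}$-lattice and let $V(\mathcal{L})\subseteq L$ be the set of values of closed formulas, i.e. of formulas containing no variables. (1) If $V(\mathcal{L})=\emptyset$, then $L$ does not have the interpolation property. (2) If $V(\mathcal{L})=L$, then $L$ has the interpolation property.
   Context: A lattice-oriented signature $\mathcal{L}$ is a finite set of connectives. Each connective $c$ has an arity $n_c\in\mathbb{N}$ and a polarity $p_c:\{1,\dots,n_c\}\to\{-,+\}$. The signature contains binary connectives $\lor,\land,\to$ with $p_\lor(1)=p_\lor(2)=p_\land(1)=p_\land(2)=+$, $p_\to(1)=-$ and $p_\to(2)=+$; nullary connectives are truth constants. A finite $\mathcal{L}$-lattice is a finite set $L$ together with an $n_c$-ary operation $c^L$ on $L$ for each connective $c$, such that: - $(L,\lor^L,\land^L)$ is a lattice, with order $x\le y$ iff $x\land y=x$; its top element is denoted $1$; - $c^L$ is monotone in every argument $i$ with $p_c(i)=+$ and antitone in every argument $i$ with $p_c(i)=-$; - for all $a,b\in L$: $1\le a\to^L b$ iff $a\le b$. Formulas (words) are built from propositional variables using the connectives. A valuation assigns elements of $L$ to the variables and extends to all formulas via the operations $c^L$. For formulas $a,b$, "$a\le b$ is valid" means that the value of $a$ is $\le$ the value of $b$ under every valuation. For a valid $a\le b$, the variables occurring only in $a$ are the left variables, those occurring only in $b$ are the right variables, and those occurring in both are the intersection variables. $L$ has the interpolation property iff for all formulas $a,b$ with $a\le b$ valid there is a formula $i$ whose variables are all intersection variables of $a,b$ such that $a\le i$ and $i\le b$ are valid. If there are no intersection variables,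 $i$ must be a closed formula. *)

theory Defs
  imports Main
begin

datatype ('c, 'v) form = Var 'v | App 'c "('c, 'v) form list"

fun vars :: "('c, 'v) form \<Rightarrow> 'v set" where
  "vars (Var x) = {x}"
| "vars (App c fs) = (\<Union>f\<in>set fs. vars f)"

fun wf_form :: "('c \<Rightarrow> nat) \<Rightarrow> ('c, 'v) form \<Rightarrow> bool" where
  "wf_form ar (Var x) = True"
| "wf_form ar (App c fs) = (length fs = ar c \<and> (\<forall>f\<in>set fs. wf_form ar f))"

fun eval :: "('c \<Rightarrow> 'a list \<Rightarrow> 'a) \<Rightarrow> ('v \<Rightarrow> 'a) \<Rightarrow> ('c, 'v) form \<Rightarrow> 'a" where
  "eval ops v (Var x) = v x"
| "eval ops v (App c fs) = ops c (map (eval ops v) fs)"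

text \<open>Lattice-oriented signature: connectives form a finite type 'c; polarity
  pol c i (i < ar c, 0-based argument index) is True for + and False for -.
  jn, mt, im are the distinguished binary connectives \<or>, \<and>, \<rightarrow>.\<close>
definition lattice_signature ::
  "('c::finite \<Rightarrow> nat) \<Rightarrow> ('c \<Rightarrow> nat \<Rightarrow> bool) \<Rightarrow> 'c \<Rightarrow> 'c \<Rightarrow> 'c \<Rightarrow> bool" where
  "lattice_signature ar pol jn mt im \<longleftrightarrow>
     distinct [jn, mt, im] \<and>
     ar jn = 2 \<and> ar mt = 2 \<and> ar im = 2 \<and>
     pol jn 0 \<and> pol jn 1 \<and> pol mt 0 \<and> pol mt 1 \<and>
     \<not> pol im 0 \<and> pol im 1"

definition lle :: "('c \<Rightarrow> 'a list \<Rightarrow> 'a) \<Rightarrow> 'c \<Rightarrow> 'a \<Rightarrow> 'a \<Rightarrow> bool" where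
  "lle ops mt x y \<longleftrightarrow> ops mt [x, y] = x"

definition ltop :: "'a set \<Rightarrow> ('c \<Rightarrow> 'a list \<Rightarrow> 'a) \<Rightarrow> 'c \<Rightarrow> 'a" where
  "ltop L ops mt = (THE t. t \<in> L \<and> (\<forall>x\<in>L. lle ops mt x t))"

definition finite_L_lattice ::
  "('c::finite \<Rightarrow> nat) \<Rightarrow> ('c \<Rightarrow> nat \<Rightarrow> bool) \<Rightarrow> 'c \<Rightarrow> 'c \<Rightarrow> 'c \<Rightarrow>
   'a set \<Rightarrow> ('c \<Rightarrow> 'a list \<Rightarrow> 'a) \<Rightarrow> bool" where
  "finite_L_lattice ar pol jn mt im L ops \<longleftrightarrow>
     finite L \<and> L \<noteq> {} \<and>
     \<comment> \<open>closure of the carrier under all operations\<close>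
     (\<forall>c xs. length xs = ar c \<and> set xs \<subseteq> L \<longrightarrow> ops c xs \<in> L) \<and>
     \<comment> \<open>(L, jn, mt) is a lattice\<close>
     (\<forall>x\<in>L. \<forall>y\<in>L. ops jn [x, y] = ops jn [y, x] \<and> ops mt [x, y] = ops mt [y, x]) \<and>
     (\<forall>x\<in>L. \<forall>y\<in>L. \<forall>z\<in>L.
        ops jn [ops jn [x, y], z] = ops jn [x, ops jn [y, z]] \<and>
        ops mt [ops mt [x, y], z] = ops mt [x, ops mt [y, z]]) \<and>
     (\<forall>x\<in>L. \<forall>y\<in>L. ops jn [x, ops mt [x, y]] = x \<and> ops mt [x, ops jn [x, y]] = x) \<and>
     \<comment> \<open>monotone in positive, antitone in negative arguments\<close>
     (\<forall>c i xs y. i < ar c \<and> length xs = ar c \<and> set xs \<subseteq> L \<and> y \<in> L \<and>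
        lle ops mt (xs ! i) y \<longrightarrow>
        (if pol c i then lle ops mt (ops c xs) (ops c (xs[i := y]))
         else lle ops mt (ops c (xs[i := y])) (ops c xs))) \<and>
     \<comment> \<open>residuation-type condition on the implication\<close>
     (\<forall>a\<in>L. \<forall>b\<in>L. lle ops mt (ltop L ops mt) (ops im [a, b]) \<longleftrightarrow> lle ops mt a b)"

definition valid_le ::
  "('c \<Rightarrow> nat) \<Rightarrow> 'c \<Rightarrow> 'a set \<Rightarrow> ('c \<Rightarrow> 'a list \<Rightarrow> 'a) \<Rightarrow>
   ('c, nat) form \<Rightarrow> ('c, nat) form \<Rightarrow> bool" where
  "valid_le ar mt L ops a b \<longleftrightarrow>
     (\<forall>v. range v \<subseteq> L \<longrightarrow> lle ops mt (eval ops v a) (eval ops v b))"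

definition interpolation_property ::
  "('c \<Rightarrow> nat) \<Rightarrow> 'c \<Rightarrow> 'a set \<Rightarrow> ('c \<Rightarrow> 'a list \<Rightarrow> 'a) \<Rightarrow> bool" where
  "interpolation_property ar mt L ops \<longleftrightarrow>
     (\<forall>a b. wf_form ar a \<and> wf_form ar b \<and> valid_le ar mt L ops a b \<longrightarrow>
        (\<exists>i. wf_form ar i \<and> vars i \<subseteq> vars a \<inter> vars b \<and>
             valid_le ar mt L ops a i \<and> valid_le ar mt L ops i b))"

text \<open>V(L): values of closed formulas (the valuation is irrelevant for closed formulas).\<close>
definition closed_values ::
  "('c \<Rightarrow> nat) \<Rightarrow> ('c \<Rightarrow> 'a list \<Rightarrow> 'a) \<Rightarrow> 'a set" where
  "closed_values ar ops =
     {eval ops (\<lambda>_. undefined) f | f :: ('c, nat) form. wf_form ar f \<and> vars f = {}}"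

end

theory Submission
  imports Defs "HOL-Library.FuncSet"
begin

text \<open>(1) The inequality x \<le> (y \<rightarrow> y) is valid, since y \<rightarrow> y evaluates to the top element, but
  its two sides share no variable; an interpolant would be a closed formula, so it has none when
  V(L) is empty.
  (2) If every element of L is named by a closed formula, replace the left variables of a valid
  a \<le> b by such names in all possible ways. Each instance is still \<le> b, because b does not
  contain them, and the finitely many instances are joined. Under any valuation one of them
  coincides with a, so the join is an interpolant.\<close>

fun subst :: "(nat \<Rightarrow> ('c, nat) form) \<Rightarrow> ('c, nat) form \<Rightarrow> ('c, nat) form" where
  "subst s (Var x) = s x"
| "subst s (App c fs) = App c (map (subst s) fs)"

lemma eval_subst: "eval ops v (subst s f) = eval ops (\<lambda>x. eval ops v (s x)) f"
  by (induction f) (auto cong: map_cong)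

lemma vars_subst: "vars (subst s f) = (\<Union>x\<in>vars f. vars (s x))"
  by (induction f) auto

lemma wf_form_subst: "wf_form ar f \<Longrightarrow> (\<And>x. wf_form ar (s x)) \<Longrightarrow> wf_form ar (subst s f)"
  by (induction f) auto

lemma subst_id_on_vars: "(\<And>x. x \<in> vars f \<Longrightarrow> s x = Var x) \<Longrightarrow> subst s f = f"
  by (induction f) (auto intro: map_idI)

lemma eval_cong: "(\<And>x. x \<in> vars f \<Longrightarrow> v x = w x) \<Longrightarrow> eval ops v f = eval ops w f"
proof (induction f)
  case (App c fs)
  then have "map (eval ops v) fs = map (eval ops w) fs"
    unfolding map_eq_conv by auto
  then show ?case by (simp only: eval.simps)
qed simp

lemma finite_vars: "finite (vars f)"
  by (induction f) auto

lemma eval_closed_form: "vars f = {} \<Longrightarrow> eval ops v f = eval ops w f"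
  by (rule eval_cong) auto

text \<open>The value at the empty list is junk; only nonempty lists are joined.\<close>
fun join_list :: "'c \<Rightarrow> ('c, nat) form list \<Rightarrow> ('c, nat) form" where
  "join_list j [] = Var 0"
| "join_list j [f] = f"
| "join_list j (f # fs) = App j [f, join_list j fs]"

lemma vars_join_list: "fs \<noteq> [] \<Longrightarrow> vars (join_list j fs) = (\<Union>f\<in>set fs. vars f)"
  by (induction j fs rule: join_list.induct) auto

lemma wf_form_join_list:
  "ar j = 2 \<Longrightarrow> fs \<noteq> [] \<Longrightarrow> \<forall>f\<in>set fs. wf_form ar f \<Longrightarrow> wf_form ar (join_list j fs)"
  by (induction j fs rule: join_list.induct) auto

locale L_lattice =
  fixes ar :: "'c::finite \<Rightarrow> nat" and pol :: "'c \<Rightarrow> nat \<Rightarrow> bool"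
    and jn mt im :: 'c and L :: "'a set" and ops :: "'c \<Rightarrow> 'a list \<Rightarrow> 'a"
  assumes signature: "lattice_signature ar pol jn mt im"
    and lattice: "finite_L_lattice ar pol jn mt im L ops"
begin

lemma arity_binary: "ar jn = 2" "ar mt = 2" "ar im = 2"
  using signature unfolding lattice_signature_def by auto

lemma finite_carrier: "finite L" and carrier_nonempty: "L \<noteq> {}"
  using lattice unfolding finite_L_lattice_def by auto

lemma ops_closed: "length xs = ar c \<Longrightarrow> set xs \<subseteq> L \<Longrightarrow> ops c xs \<in> L"
  using lattice unfolding finite_L_lattice_def by blast

lemma jn_closed: "x \<in> L \<Longrightarrow> y \<in> L \<Longrightarrow> ops jn [x, y] \<in> L"
  and mt_closed: "x \<in> L \<Longrightarrow> y \<in> L \<Longrightarrow> ops mt [x, y] \<in> L"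
  and im_closed: "x \<in> L \<Longrightarrow> y \<in> L \<Longrightarrow> ops im [x, y] \<in> L"
  by (auto intro!: ops_closed simp: arity_binary)

lemma commute: "x \<in> L \<Longrightarrow> y \<in> L \<Longrightarrow> ops jn [x, y] = ops jn [y, x] \<and> ops mt [x, y] = ops mt [y, x]"
  using lattice unfolding finite_L_lattice_def by blast

lemma assoc: "x \<in> L \<Longrightarrow> y \<in> L \<Longrightarrow> z \<in> L \<Longrightarrow>
    ops jn [ops jn [x, y], z] = ops jn [x, ops jn [y, z]] \<and>
    ops mt [ops mt [x, y], z] = ops mt [x, ops mt [y, z]]"
  using lattice unfolding finite_L_lattice_def by blast

lemma absorb: "x \<in> L \<Longrightarrow> y \<in> L \<Longrightarrow> ops jn [x, ops mt [x, y]] = x \<and> ops mt [x, ops jn [x, y]] = x"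
  using lattice unfolding finite_L_lattice_def by blast

lemma im_top_iff_le: "a \<in> L \<Longrightarrow> b \<in> L \<Longrightarrow> lle ops mt (ltop L ops mt) (ops im [a, b]) \<longleftrightarrow> lle ops mt a b"
  using lattice unfolding finite_L_lattice_def by blast

lemma lle_refl: "x \<in> L \<Longrightarrow> lle ops mt x x"
  unfolding lle_def by (metis absorb mt_closed)

lemma lle_trans: "x \<in> L \<Longrightarrow> y \<in> L \<Longrightarrow> z \<in> L \<Longrightarrow> lle ops mt x y \<Longrightarrow> lle ops mt y z \<Longrightarrow> lle ops mt x z"
  unfolding lle_def by (metis assoc)

lemma lle_antisym: "x \<in> L \<Longrightarrow> y \<in> L \<Longrightarrow> lle ops mt x y \<Longrightarrow> lle ops mt y x \<Longrightarrow> x = y"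
  unfolding lle_def by (metis commute)

lemma lle_iff_jn: "x \<in> L \<Longrightarrow> y \<in> L \<Longrightarrow> lle ops mt x y \<longleftrightarrow> ops jn [x, y] = y"
  unfolding lle_def by (metis commute absorb)

lemma jn_upper1: "x \<in> L \<Longrightarrow> y \<in> L \<Longrightarrow> lle ops mt x (ops jn [x, y])"
  unfolding lle_def using absorb by blast

lemma jn_upper2: "x \<in> L \<Longrightarrow> y \<in> L \<Longrightarrow> lle ops mt y (ops jn [x, y])"
  using jn_upper1 commute by metis

lemma jn_least:
  assumes "x \<in> L" "y \<in> L" "z \<in> L" "lle ops mt x z" "lle ops mt y z"
  shows "lle ops mt (ops jn [x, y]) z"
proof -
  have "ops jn [x, z] = z" "ops jn [y, z] = z" using assms lle_iff_jn by auto
  then have "ops jn [ops jn [x, y], z] = z" using assoc assms by simp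
  then show ?thesis using lle_iff_jn jn_closed assms by simp
qed

lemma ex_upper_bound: "finite S \<Longrightarrow> S \<noteq> {} \<Longrightarrow> S \<subseteq> L \<Longrightarrow> \<exists>u\<in>L. \<forall>x\<in>S. lle ops mt x u"
proof (induction S rule: finite_ne_induct)
  case (singleton x)
  then show ?case using lle_refl by auto
next
  case (insert x S)
  then obtain u where u: "u \<in> L" "\<forall>y\<in>S. lle ops mt y u" by auto
  have "\<forall>y\<in>insert x S. lle ops mt y (ops jn [x, u])"
    using insert.prems u jn_upper1 jn_upper2 lle_trans jn_closed by (metis insert_iff insert_subset subsetD)
  then show ?case using insert.prems u jn_closed by blast
qed

lemma ltop_in: "ltop L ops mt \<in> L"
  and ltop_greatest: "x \<in> L \<Longrightarrow> lle ops mt x (ltop L ops mt)"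
proof -
  obtain t where t: "t \<in> L" "\<forall>x\<in>L. lle ops mt x t"
    using ex_upper_bound[OF finite_carrier carrier_nonempty] by auto
  have "ltop L ops mt = t"
    unfolding ltop_def by (rule the_equality) (use t lle_antisym in auto)
  then show "ltop L ops mt \<in> L" "x \<in> L \<Longrightarrow> lle ops mt x (ltop L ops mt)" using t by auto
qed

lemma lle_im_self:
  assumes "x \<in> L" "y \<in> L"
  shows "lle ops mt x (ops im [y, y])"
proof -
  have "lle ops mt (ltop L ops mt) (ops im [y, y])"
    using im_top_iff_le lle_refl assms(2) by blast
  then show ?thesis
    using lle_trans[OF assms(1) ltop_in im_closed] ltop_greatest assms by blast
qed

lemma eval_in_carrier: "range v \<subseteq> L \<Longrightarrow> wf_form ar f \<Longrightarrow> eval ops v f \<in> L"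
  by (induction f) (auto intro!: ops_closed)

lemma valid_le_subst:
  assumes "valid_le ar mt L ops a b" "\<And>x. wf_form ar (s x)"
  shows "valid_le ar mt L ops (subst s a) (subst s b)"
  unfolding valid_le_def eval_subst
proof (intro allI impI)
  fix v :: "nat \<Rightarrow> 'a" assume "range v \<subseteq> L"
  then have "range (\<lambda>x. eval ops v (s x)) \<subseteq> L" using eval_in_carrier assms(2) by auto
  then show "lle ops mt (eval ops (\<lambda>x. eval ops v (s x)) a) (eval ops (\<lambda>x. eval ops v (s x)) b)"
    by (rule assms(1)[unfolded valid_le_def, rule_format])
qed

lemma eval_join_list_in_carrier:
  "fs \<noteq> [] \<Longrightarrow> \<forall>f\<in>set fs. eval ops v f \<in> L \<Longrightarrow> eval ops v (join_list jn fs) \<in> L"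
  by (induction fs rule: induct_list012) (auto intro: jn_closed)

lemma eval_join_list_upper:
  "f \<in> set fs \<Longrightarrow> \<forall>f\<in>set fs. eval ops v f \<in> L \<Longrightarrow>
    lle ops mt (eval ops v f) (eval ops v (join_list jn fs))"
proof (induction fs rule: induct_list012)
  case (2 g)
  then show ?case using lle_refl by auto
next
  case (3 g h hs)
  define y where "y = eval ops v (join_list jn (h # hs))"
  have g: "eval ops v g \<in> L" and y: "y \<in> L"
    using 3 eval_join_list_in_carrier unfolding y_def by auto
  have "lle ops mt (eval ops v f) (ops jn [eval ops v g, y])"
  proof (cases "f = g")
    case True
    then show ?thesis using jn_upper1[OF g y] by simp
  next
    case False
    have "eval ops v f \<in> L" using "3.prems" by auto
    moreover have "lle ops mt (eval ops v f) y"
      using "3.IH"(2) "3.prems" False unfolding y_def by simp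
    ultimately have f: "eval ops v f \<in> L" "lle ops mt (eval ops v f) y" .
    show ?thesis by (rule lle_trans[OF f(1) y jn_closed[OF g y] f(2) jn_upper2[OF g y]])
  qed
  then show ?case unfolding y_def by simp
qed simp

lemma eval_join_list_least:
  "fs \<noteq> [] \<Longrightarrow> \<forall>f\<in>set fs. eval ops v f \<in> L \<and> lle ops mt (eval ops v f) c \<Longrightarrow> c \<in> L \<Longrightarrow>
    lle ops mt (eval ops v (join_list jn fs)) c"
proof (induction fs rule: induct_list012)
  case (3 g h hs)
  have g: "eval ops v g \<in> L" "lle ops mt (eval ops v g) c"
    using "3.prems"(2) by simp_all
  have y: "eval ops v (join_list jn (h # hs)) \<in> L" "lle ops mt (eval ops v (join_list jn (h # hs))) c"
    using "3.IH"(2) "3.prems" eval_join_list_in_carrier by auto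
  show ?case using jn_least[OF g(1) y(1) "3.prems"(3) g(2) y(2)] by simp
qed auto

lemma no_interpolation_if_no_closed_values:
  assumes "closed_values ar ops = {}"
  shows "\<not> interpolation_property ar mt L ops"
proof
  assume "interpolation_property ar mt L ops"
  define a :: "('c, nat) form" where "a = Var 0"
  define b :: "('c, nat) form" where "b = App im [Var 1, Var 1]"
  have "wf_form ar a" "wf_form ar b" using arity_binary by (auto simp: a_def b_def)
  moreover have "valid_le ar mt L ops a b"
    unfolding valid_le_def
  proof (intro allI impI)
    fix v :: "nat \<Rightarrow> 'a" assume "range v \<subseteq> L"
    then have "v 0 \<in> L" "v 1 \<in> L" by auto
    then show "lle ops mt (eval ops v a) (eval ops v b)"
      unfolding a_def b_def using lle_im_self by simp
  qed
  ultimately obtain i where "wf_form ar i" "vars i \<subseteq> vars a \<inter> vars b"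
    using \<open>interpolation_property ar mt L ops\<close> unfolding interpolation_property_def by blast
  moreover have "vars a \<inter> vars b = {}" by (simp add: a_def b_def)
  ultimately have "eval ops (\<lambda>_. undefined) i \<in> closed_values ar ops"
    unfolding closed_values_def by blast
  then show False using assms by simp
qed

lemma ex_closed_names:
  assumes "closed_values ar ops = L"
  obtains name :: "'a \<Rightarrow> ('c, nat) form"
  where "\<forall>e\<in>L. wf_form ar (name e) \<and> vars (name e) = {} \<and> (\<forall>v. eval ops v (name e) = e)"
proof -
  have "\<forall>e\<in>L. \<exists>f :: ('c, nat) form. wf_form ar f \<and> vars f = {} \<and> (\<forall>v. eval ops v f = e)"
  proof
    fix e assume "e \<in> L"
    then have "e \<in> closed_values ar ops" using assms by simp
    then obtain f :: "('c, nat) form"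
      where f: "wf_form ar f" "vars f = {}" "eval ops (\<lambda>_. undefined) f = e"
      unfolding closed_values_def by blast
    have "eval ops v f = e" for v
      using eval_closed_form[OF f(2), where v = v and w = "\<lambda>_. undefined"] f(3) by simp
    then show "\<exists>f :: ('c, nat) form. wf_form ar f \<and> vars f = {} \<and> (\<forall>v. eval ops v f = e)"
      using f(1,2) by blast
  qed
  then obtain name :: "'a \<Rightarrow> ('c, nat) form"
    where "\<forall>e\<in>L. wf_form ar (name e) \<and> vars (name e) = {} \<and> (\<forall>v. eval ops v (name e) = e)"
    by (rule bchoice[THEN exE])
  then show ?thesis by (rule that)
qed

lemma interpolation_if_all_closed_values:
  assumes "closed_values ar ops = L"
  shows "interpolation_property ar mt L ops"
  unfolding interpolation_property_def
proof (intro allI impI, elim conjE)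
  fix a b :: "('c, nat) form"
  assume wf_a: "wf_form ar a" and wf_b: "wf_form ar b" and ab: "valid_le ar mt L ops a b"
  obtain name :: "'a \<Rightarrow> ('c, nat) form" where name: "\<forall>e\<in>L.
      wf_form ar (name e) \<and> vars (name e) = {} \<and> (\<forall>v. eval ops v (name e) = e)"
    using ex_closed_names[OF assms] by blast
  define S where "S = vars a - vars b"
  define inst where "inst g x = (if x \<in> S then name (g x) else Var x)" for g :: "nat \<Rightarrow> 'a" and x
  define G where "G = S \<rightarrow>\<^sub>E L"
  have "finite G" unfolding G_def S_def using finite_vars finite_carrier by (intro finite_PiE) auto
  then obtain gs where gs: "set gs = G" using finite_list by blast
  define fs where "fs = map (\<lambda>g. subst (inst g) a) gs"
  have "G \<noteq> {}" unfolding G_def using carrier_nonempty by (simp add: PiE_eq_empty_iff)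
  then have fs_ne: "fs \<noteq> []" using gs fs_def by auto
  have wf_inst: "wf_form ar (inst g x)" if "g \<in> G" for g x
    using that name unfolding inst_def G_def by (auto simp: PiE_iff)
  have wf_fs: "\<forall>f\<in>set fs. wf_form ar f"
    unfolding fs_def using gs wf_inst wf_a by (auto intro!: wf_form_subst)
  have fs_in_carrier: "\<forall>f\<in>set fs. eval ops v f \<in> L" if "range v \<subseteq> L" for v
    using wf_fs eval_in_carrier that by auto
  have vars_inst: "vars (inst g x) \<subseteq> vars a \<inter> vars b" if "g \<in> G" "x \<in> vars a" for g x
    using that name unfolding inst_def G_def S_def by (auto simp: PiE_iff)
  have "vars (join_list jn fs) \<subseteq> vars a \<inter> vars b"
    unfolding vars_join_list[OF fs_ne] unfolding fs_def using gs vars_inst by (auto simp: vars_subst)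
  moreover have "valid_le ar mt L ops a (join_list jn fs)"
    unfolding valid_le_def
  proof (intro allI impI)
    fix v :: "nat \<Rightarrow> 'a" assume v: "range v \<subseteq> L"
    have "restrict v S \<in> G" unfolding G_def using v by auto
    then have mem: "subst (inst (restrict v S)) a \<in> set fs" unfolding fs_def using gs by auto
    have "eval ops v (subst (inst (restrict v S)) a) = eval ops v a"
      unfolding eval_subst using v name by (intro eval_cong) (auto simp: inst_def)
    then show "lle ops mt (eval ops v a) (eval ops v (join_list jn fs))"
      using eval_join_list_upper[OF mem fs_in_carrier[OF v]] by simp
  qed
  moreover have "valid_le ar mt L ops (join_list jn fs) b"
    unfolding valid_le_def
  proof (intro allI impI)
    fix v :: "nat \<Rightarrow> 'a" assume v: "range v \<subseteq> L"
    have instance_le_b: "valid_le ar mt L ops (subst (inst g) a) b" if "g \<in> G" for g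
    proof -
      have "subst (inst g) b = b" by (rule subst_id_on_vars) (simp add: inst_def S_def)
      then show ?thesis using valid_le_subst[where s = "inst g", OF ab wf_inst[OF that]] by simp
    qed
    have "\<forall>f\<in>set fs. eval ops v f \<in> L \<and> lle ops mt (eval ops v f) (eval ops v b)"
    proof
      fix f assume "f \<in> set fs"
      then obtain g where "g \<in> G" "f = subst (inst g) a" unfolding fs_def using gs by auto
      then show "eval ops v f \<in> L \<and> lle ops mt (eval ops v f) (eval ops v b)"
        using instance_le_b[of g] fs_in_carrier[OF v] \<open>f \<in> set fs\<close> v
        unfolding valid_le_def by simp
    qed
    then show "lle ops mt (eval ops v (join_list jn fs)) (eval ops v b)"
      by (rule eval_join_list_least[OF fs_ne _ eval_in_carrier[OF v wf_b]])
  qed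
  ultimately show "\<exists>i. wf_form ar i \<and> vars i \<subseteq> vars a \<inter> vars b \<and>
      valid_le ar mt L ops a i \<and> valid_le ar mt L ops i b"
    using wf_form_join_list[OF arity_binary(1) fs_ne wf_fs] by blast
qed

end

theorem mainTheorem2:
  fixes ar :: "'c::finite \<Rightarrow> nat" and pol :: "'c \<Rightarrow> nat \<Rightarrow> bool"
    and jn mt im :: 'c and L :: "'a set" and ops :: "'c \<Rightarrow> 'a list \<Rightarrow> 'a"
  assumes "lattice_signature ar pol jn mt im"
    and "finite_L_lattice ar pol jn mt im L ops"
  shows "(closed_values ar ops = {} \<longrightarrow> \<not> interpolation_property ar mt L ops)
       \<and> (closed_values ar ops = L \<longrightarrow> interpolation_property ar mt L ops)"
proof -
  interpret L_lattice ar pol jn mt im L ops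
    using assms by unfold_locales
  show ?thesis
    using no_interpolation_if_no_closed_values interpolation_if_all_closed_values by blast
qed

end
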